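(* Consider the setting in the context with $\rho>0$, symmetric $P_i,Q_i\in\mathbb{R}^{n\times n}$, and let $(\check{\bm{W}}^*,\hat{\bm{W}}^*,\lambda^* )$ be a KKT point of (P1), $\bm{Z}^*=(\check{\bm{W}}^*,\hat{\bm{W}}^* )$. If $\bm{G}_1^{\dagger}\succ0$, $\bm{G}_2\succ\bm{G}_3$, $0<\gamma<2$ and $\lambda^0=\bm{0}$, then for every $k\ge1$ $$\bm{F}(\overline{\bm{Z}}^k)-\bm{F}(\bm{Z}^* )\le\frac1{2k}\Big(\|\check{\bm{W}}^0-\check{\bm{W}}^*\|^2_{\bm{G}_1^{\dagger}}+\|\hat{\bm{W}}^0-\hat{\bm{W}}^*\|^2_{\bm{G}_2}\Big),\qquad \overline{\bm{Z}}^k=\frac1k\sum_{j=1}^k\bm{Z}^j,$$ where $\bm{Z}^j=(\check{\bm{W}}^j,\hat{\bm{W}}^j)$ are the iterates of the algorithm.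
   Context: Let $\mathcal{G}=(\mathcal{V},\mathcal{E})$ be a connected undirected graph with $\mathcal{V}=\{1,\dots,N\}$, $N\ge 2$, and let $d_i$ be the degree of $i$. Variables are $\check{\bm{w}}_i,\hat{\bm{w}}_i\in\mathbb{R}^n$; write $\check{\bm{W}}=(\check{\bm{w}}_1,\dots,\check{\bm{w}}_N)$, $\hat{\bm{W}}$ likewise, $\bm{z}_i=(\check{\bm{w}}_i,\hat{\bm{w}}_i)$, $\bm{Z}=(\check{\bm{W}},\hat{\bm{W}})$. The matrix $\bm{A}\in\mathbb{R}^{|\mathcal{E}|n\times Nn}$ has one block row per edge $\{i,j\}$ ($i<j$) with $I_n$ in block column $i$, $-I_n$ in block column $j$, zeros elsewhere; $A_i$ is its $i$-th block column, so $A_i^TA_i=d_iI_n$. Each $f_i:\mathbb{R}^n\times\mathbb{R}^n\to\mathbb{R}$ is differentiable, jointly convex, with $\nabla f_i$ Lipschitz with constant $C_i$. Let $\mu_1\ge0$, $\mu_2>0$, $F_i(\bm{z}_i)=f_i(\check{\bm{w}}_i,\hat{\bm{w}}_i)+\frac{\mu_1}{2}\|\check{\bm{w}}_i\|^2+\frac{\mu_2}{2}\|\hat{\bm{w}}_i\|^2$, $\bm{F}(\bm{Z})=\sum_iF_i(\bm{z}_i)$, and $m$ a constant with $0<m\le\mu_2$. Problem (P1): minimize $\bm{F}(\bm{Z})$ s.t. $\bm{A}\check{\bm{W}}=0$; a KKT point is $(\check{\bm{W}}^*,\hat{\bm{W}}^*,\lambda^* )$ with $\bm{A}\check{\bm{W}}^*=0$,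 $A_i^T\lambda^*=\nabla_{\check{\bm{w}}_i}F_i(\bm{z}_i^* )$, $\nabla_{\hat{\bm{w}}_i}F_i(\bm{z}_i^* )=0$. Algorithm: with $\mathcal{L}_\rho=\bm{F}(\bm{Z})-\lambda^T\bm{A}\check{\bm{W}}+\frac\rho2\|\bm{A}\check{\bm{W}}\|^2$, from arbitrary $\check{\bm{W}}^0,\hat{\bm{W}}^0$ and given $\lambda^0$, for $k=0,1,\dots$: (i) for all $i$ in parallel $\check{\bm{w}}_i^{k+1}=\arg\min_{\check{\bm{w}}_i}\mathcal{L}_\rho(\check{\bm{w}}_i,\check{\bm{W}}^k_{-i},\hat{\bm{W}}^k,\lambda^k)+\frac12\|\check{\bm{w}}_i-\check{\bm{w}}_i^k\|^2_{P_i}$; (ii) $\lambda^{k+1}=\lambda^k-\gamma\rho\bm{A}\check{\bm{W}}^{k+1}$; (iii) for all $i$ in parallel $\hat{\bm{w}}_i^{k+1}=\arg\min_{\hat{\bm{w}}_i}F_i(\check{\bm{w}}_i^{k+1},\hat{\bm{w}}_i)+\frac12\|\hat{\bm{w}}_i-\hat{\bm{w}}_i^k\|^2_{Q_i}$. Notation: $\|x\|^2_S=x^TSx$; $\bm{G}_1=\mathrm{blkdiag}(\rho d_iI_n+P_i)_i$, $\bm{G}_1^{\dagger}=\bm{G}_1-\rho\bm{A}^T\bm{A}$, $\bm{G}_2=\mathrm{blkdiag}(Q_i)_i$, $\bm{G}_3=\mathrm{blkdiag}\big(\frac{C_i}{m}(C_i+m)I_n\big)_i$. *)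

theory Defs
  imports "HOL-Analysis.Analysis"
begin

definition vset :: "nat \<Rightarrow> nat set" where
  "vset N = {1..N}"

definition graph_ok :: "nat \<Rightarrow> (nat \<times> nat) set \<Rightarrow> bool" where
  "graph_ok N E \<longleftrightarrow> (\<forall>(i,j)\<in>E. 1 \<le> i \<and> i < j \<and> j \<le> N)"

definition connected_graph :: "nat \<Rightarrow> (nat \<times> nat) set \<Rightarrow> bool" where
  "connected_graph N E \<longleftrightarrow> (\<forall>i\<in>vset N. \<forall>j\<in>vset N. (i,j) \<in> (E \<union> E\<inverse>)\<^sup>*)"

definition deg :: "(nat \<times> nat) set \<Rightarrow> nat \<Rightarrow> nat" where
  "deg E i = card {e\<in>E. fst e = i \<or> snd e = i}"

text \<open>Block of A*W for edge e=(i,j): w_i - w_j.\<close>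
definition Ablk :: "(nat \<Rightarrow> real^'n) \<Rightarrow> nat \<times> nat \<Rightarrow> real^'n" where
  "Ablk W e = W (fst e) - W (snd e)"

text \<open>i-th block of A^T lambda.\<close>
definition ATlam :: "(nat \<times> nat) set \<Rightarrow> (nat \<times> nat \<Rightarrow> real^'n) \<Rightarrow> nat \<Rightarrow> real^'n" where
  "ATlam E lam i = (\<Sum>e\<in>{e\<in>E. fst e = i}. lam e) - (\<Sum>e\<in>{e\<in>E. snd e = i}. lam e)"

definition wnorm2 :: "real^'n \<Rightarrow> real^'n^'n \<Rightarrow> real" where
  "wnorm2 x S = x \<bullet> (S *v x)"

definition Floc :: "real \<Rightarrow> real \<Rightarrow> (nat \<Rightarrow> (real^'n) \<times> (real^'n) \<Rightarrow> real) \<Rightarrow> nat \<Rightarrow> real^'n \<Rightarrow> real^'n \<Rightarrow> real" where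
  "Floc mu1 mu2 f i wc wh = f i (wc, wh) + mu1/2 * (norm wc)^2 + mu2/2 * (norm wh)^2"

definition Ftot :: "nat \<Rightarrow> real \<Rightarrow> real \<Rightarrow> (nat \<Rightarrow> (real^'n) \<times> (real^'n) \<Rightarrow> real) \<Rightarrow> (nat \<Rightarrow> real^'n) \<Rightarrow> (nat \<Rightarrow> real^'n) \<Rightarrow> real" where
  "Ftot N mu1 mu2 f Wc Wh = (\<Sum>i\<in>vset N. Floc mu1 mu2 f i (Wc i) (Wh i))"

definition Lrho :: "nat \<Rightarrow> (nat \<times> nat) set \<Rightarrow> real \<Rightarrow> real \<Rightarrow> (nat \<Rightarrow> (real^'n) \<times> (real^'n) \<Rightarrow> real) \<Rightarrow> real
   \<Rightarrow> (nat \<Rightarrow> real^'n) \<Rightarrow> (nat \<Rightarrow> real^'n) \<Rightarrow> (nat \<times> nat \<Rightarrow> real^'n) \<Rightarrow> real" where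
  "Lrho N E mu1 mu2 f rho Wc Wh lam =
     Ftot N mu1 mu2 f Wc Wh - (\<Sum>e\<in>E. lam e \<bullet> Ablk Wc e) + rho/2 * (\<Sum>e\<in>E. (norm (Ablk Wc e))^2)"

text \<open>Quadratic forms of the block matrices G1, G1dagger = G1 - rho A^T A, G2, G3.\<close>
definition G1_qf :: "nat \<Rightarrow> (nat \<times> nat) set \<Rightarrow> real \<Rightarrow> (nat \<Rightarrow> real^'n^'n) \<Rightarrow> (nat \<Rightarrow> real^'n) \<Rightarrow> real" where
  "G1_qf N E rho P W = (\<Sum>i\<in>vset N. rho * real (deg E i) * (norm (W i))^2 + wnorm2 (W i) (P i))"

definition G1dag_qf :: "nat \<Rightarrow> (nat \<times> nat) set \<Rightarrow> real \<Rightarrow> (nat \<Rightarrow> real^'n^'n) \<Rightarrow> (nat \<Rightarrow> real^'n) \<Rightarrow> real" where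
  "G1dag_qf N E rho P W = G1_qf N E rho P W - rho * (\<Sum>e\<in>E. (norm (Ablk W e))^2)"

definition G2_qf :: "nat \<Rightarrow> (nat \<Rightarrow> real^'n^'n) \<Rightarrow> (nat \<Rightarrow> real^'n) \<Rightarrow> real" where
  "G2_qf N Q W = (\<Sum>i\<in>vset N. wnorm2 (W i) (Q i))"

definition G3_qf :: "nat \<Rightarrow> (nat \<Rightarrow> real) \<Rightarrow> real \<Rightarrow> (nat \<Rightarrow> real^'n) \<Rightarrow> real" where
  "G3_qf N C m W = (\<Sum>i\<in>vset N. C i / m * (C i + m) * (norm (W i))^2)"

definition posdef_blk :: "nat \<Rightarrow> ((nat \<Rightarrow> real^'n) \<Rightarrow> real) \<Rightarrow> bool" where
  "posdef_blk N q \<longleftrightarrow> (\<forall>W. (\<exists>i\<in>vset N. W i \<noteq> 0) \<longrightarrow> q W > 0)"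

end

theory Submission
  imports Defs
begin

(* Write F^* for the objective at Z^* and
     Phi_j = |X^j - X^*|^2_G1dag + |Y^j - Y^*|^2_G2 + |lambda^j|^2 / (gamma rho).
   Every iteration satisfies F(Z^(j+1)) - F^* <= (Phi_j - Phi_(j+1)) / 2. For each node, compare
   F_i at the new iterate with F_i at Z^* via the gradient inequality of f_i at (x_i^(j+1), y_i^j) and
   the descent lemma in the y-block; the Lipschitz error is bounded by |Y^(j+1) - Y^j|^2_G3, which
   G2 > G3 absorbs. The optimality conditions of the two proximal updates turn the gradients into
   multiplier, penalty and proximal terms. Penalty and proximal terms combine into differences of
   G1dag-norms, and the multiplier step gives
     lambda^j . A X^(j+1) - rho |A X^(j+1)|^2 <= (|lambda^j|^2 - |lambda^(j+1)|^2) / (2 gamma rho)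
   as long as gamma <= 2. Summing over j, Jensen's inequality for the convex F and lambda^0 = 0 give
   the ergodic bound. *)

lemma convex_on_gradient_inequality:
  fixes f :: "'a::real_inner \<Rightarrow> real"
  assumes cvx: "convex_on UNIV f" and d: "\<And>z. (f has_derivative (\<lambda>h. g z \<bullet> h)) (at z)"
  shows "f x + g x \<bullet> (y - x) \<le> f y"
proof -
  define \<phi> where "\<phi> t = f (x + t *\<^sub>R (y - x))" for t :: real
  have "convex_on UNIV \<phi>"
  proof (rule convex_onI)
    fix t a b :: real assume t: "0 < t" "t < 1"
    have "x + ((1 - t) *\<^sub>R a + t *\<^sub>R b) *\<^sub>R (y - x)
        = (1 - t) *\<^sub>R (x + a *\<^sub>R (y - x)) + t *\<^sub>R (x + b *\<^sub>R (y - x))"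
      by (simp add: algebra_simps)
    then show "\<phi> ((1 - t) *\<^sub>R a + t *\<^sub>R b) \<le> (1 - t) * \<phi> a + t * \<phi> b"
      unfolding \<phi>_def using convex_onD[OF cvx, of t] t by simp
  qed simp
  moreover have "(\<phi> has_real_derivative (g x \<bullet> (y - x))) (at 0)"
    unfolding \<phi>_def has_field_derivative_def
    by (rule has_derivative_compose[of _ _ _ _ f, OF _ d, THEN has_derivative_eq_rhs])
       (auto intro!: derivative_eq_intros simp: mult_commute_abs)
  ultimately have "\<phi> 1 - \<phi> 0 \<ge> g x \<bullet> (y - x)"
    using convex_on_imp_above_tangent[of UNIV \<phi> 0 1] by simp
  then show ?thesis unfolding \<phi>_def by simp
qed

lemma lipschitz_gradient_upper_bound:
  fixes f :: "'a::real_inner \<Rightarrow> real"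
  assumes d: "\<And>z. (f has_derivative (\<lambda>h. g z \<bullet> h)) (at z)"
    and lip: "\<And>z z'. norm (g z - g z') \<le> C * norm (z - z')"
  shows "f y \<le> f x + g x \<bullet> (y - x) + C/2 * (norm (y - x))\<^sup>2"
proof -
  define v where "v = y - x"
  define h where "h t = f (x + t *\<^sub>R v) - t * (g x \<bullet> v) - C/2 * t\<^sup>2 * (norm v)\<^sup>2" for t :: real
  have "h 1 \<le> h 0"
  proof (rule DERIV_nonpos_imp_nonincreasing[of 0 1 h])
    fix t :: real assume t: "0 \<le> t" "t \<le> 1"
    have "(h has_real_derivative (g (x + t *\<^sub>R v) - g x) \<bullet> v - C * t * (norm v)\<^sup>2) (at t)"
      unfolding h_def has_field_derivative_def
      by (rule has_derivative_compose[of _ _ _ _ f, OF _ d, THEN has_derivative_eq_rhs]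
          derivative_eq_intros | force simp: algebra_simps inner_diff_left)+
    moreover have "(g (x + t *\<^sub>R v) - g x) \<bullet> v \<le> C * t * (norm v)\<^sup>2"
    proof -
      have "(g (x + t *\<^sub>R v) - g x) \<bullet> v \<le> norm (g (x + t *\<^sub>R v) - g x) * norm v"
        by (rule norm_cauchy_schwarz)
      also have "\<dots> \<le> C * norm (t *\<^sub>R v) * norm v"
        using lip[of "x + t *\<^sub>R v" x] by (intro mult_right_mono) auto
      finally show ?thesis using t by (simp add: power2_eq_square mult_ac)
    qed
    ultimately show "\<exists>D. (h has_real_derivative D) (at t) \<and> D \<le> 0" by force
  qed simp
  then show ?thesis unfolding h_def v_def by simp
qed

lemma gradient_eq_0_at_minimum:
  fixes \<phi> :: "'a::real_inner \<Rightarrow> real"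
  assumes min: "\<And>w. \<phi> u \<le> \<phi> w" and d: "(\<phi> has_derivative (\<lambda>h. G \<bullet> h)) (at u)"
  shows "G = 0"
proof -
  have "(\<lambda>h. G \<bullet> h) = (\<lambda>h. 0)"
    by (rule has_derivative_local_min[OF d]) (simp add: min)
  then have "G \<bullet> G = 0" by metis
  then show ?thesis by simp
qed

lemma inner_matrix_symmetric:
  fixes S :: "real^'n^'n"
  assumes "transpose S = S"
  shows "x \<bullet> (S *v y) = (S *v x) \<bullet> y"
  by (metis assms dot_lmul_matrix vector_transpose_matrix)

lemma has_derivative_wnorm2:
  fixes S :: "real^'n^'n"
  assumes "transpose S = S"
  shows "((\<lambda>w. wnorm2 (w - a) S) has_derivative (\<lambda>h. (2 *\<^sub>R (S *v (u - a))) \<bullet> h)) (at u)"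
proof -
  have "((\<lambda>w. S *v (w - a)) has_derivative (\<lambda>h. S *v h)) (at u)"
    by (rule bounded_linear.has_derivative[OF matrix_vector_mul_bounded_linear, of _ "\<lambda>h. h"])
       (auto intro!: derivative_eq_intros)
  then have "((\<lambda>w. (w - a) \<bullet> (S *v (w - a))) has_derivative
      (\<lambda>h. (u - a) \<bullet> (S *v h) + h \<bullet> (S *v (u - a)))) (at u)"
    by (auto intro!: derivative_eq_intros)
  then show ?thesis
    unfolding wnorm2_def
    by (rule has_derivative_eq_rhs) (auto simp: fun_eq_iff inner_commute inner_matrix_symmetric[OF assms])
qed

lemma wnorm2_polarization:
  fixes S :: "real^'n^'n"
  assumes "transpose S = S"
  shows "(S *v (a - b)) \<bullet> (a - c) = 1/2 * (wnorm2 (a - c) S + wnorm2 (a - b) S - wnorm2 (b - c) S)"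
proof -
  have "(S *v x) \<bullet> y = (S *v y) \<bullet> x" for x y
    by (metis assms inner_commute inner_matrix_symmetric)
  from this[of "a - b" "a - c"] this[of "b" "a"] this[of "c" "a"] this[of "c" "b"] show ?thesis
    unfolding wnorm2_def
    by (simp add: matrix_vector_mult_diff_distrib inner_diff_left inner_diff_right inner_commute
        algebra_simps)
qed

lemma mult_le_weighted_squares:
  fixes C a b m :: real
  assumes "m > 0"
  shows "C * a * b \<le> m/2 * b\<^sup>2 + C\<^sup>2 / (2 * m) * a\<^sup>2"
proof -
  have "0 \<le> m/2 * (b - C * a / m)\<^sup>2" using assms by simp
  also have "\<dots> = m/2 * b\<^sup>2 - C * a * b + C\<^sup>2 / (2 * m) * a\<^sup>2"
    using assms by (simp add: power2_eq_square field_simps)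
  finally show ?thesis by simp
qed

lemma has_derivative_Floc_fst:
  assumes d: "\<And>z. (f i has_derivative (\<lambda>h. g z \<bullet> h)) (at z)"
  shows "((\<lambda>w. Floc mu1 mu2 f i w b) has_derivative (\<lambda>h. (fst (g (u, b)) + mu1 *\<^sub>R u) \<bullet> h)) (at u)"
proof -
  have "((\<lambda>w. f i (w, b)) has_derivative (\<lambda>h. fst (g (u, b)) \<bullet> h)) (at u)"
    by (rule has_derivative_compose[of "\<lambda>w. (w, b)", OF _ d, THEN has_derivative_eq_rhs])
       (auto intro!: derivative_eq_intros simp: inner_Pair_0)
  then show ?thesis
    unfolding Floc_def power2_norm_eq_inner
    by (auto intro!: derivative_eq_intros elim!: has_derivative_eq_rhs
        simp: fun_eq_iff inner_add_right inner_commute)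
qed

lemma has_derivative_Floc_snd:
  assumes d: "\<And>z. (f i has_derivative (\<lambda>h. g z \<bullet> h)) (at z)"
  shows "((\<lambda>w. Floc mu1 mu2 f i a w) has_derivative (\<lambda>h. (snd (g (a, u)) + mu2 *\<^sub>R u) \<bullet> h)) (at u)"
proof -
  have "((\<lambda>w. f i (a, w)) has_derivative (\<lambda>h. snd (g (a, u)) \<bullet> h)) (at u)"
    by (rule has_derivative_compose[of "\<lambda>w. (a, w)", OF _ d, THEN has_derivative_eq_rhs])
       (auto intro!: derivative_eq_intros simp: inner_Pair_0)
  then show ?thesis
    unfolding Floc_def power2_norm_eq_inner
    by (auto intro!: derivative_eq_intros elim!: has_derivative_eq_rhs
        simp: fun_eq_iff inner_add_right inner_commute)
qed

lemma scaled_inner_diff_eq: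
  fixes a b :: "'a::real_inner"
  shows "c * (a \<bullet> (b - a)) = c/2 * (norm b)\<^sup>2 - c/2 * (norm a)\<^sup>2 - c/2 * (norm (b - a))\<^sup>2"
proof -
  have "2 * (a \<bullet> (b - a)) = (norm b)\<^sup>2 - (norm a)\<^sup>2 - (norm (b - a))\<^sup>2"
    by (simp add: power2_norm_eq_inner inner_diff_left inner_diff_right inner_commute)
  then have "c/2 * (2 * (a \<bullet> (b - a))) = c/2 * ((norm b)\<^sup>2 - (norm a)\<^sup>2 - (norm (b - a))\<^sup>2)"
    by (rule arg_cong)
  then show ?thesis by (simp add: right_diff_distrib)
qed

lemma Floc_gradient_inequality:
  assumes cvx: "convex_on UNIV (f i)" and d: "\<And>z. (f i has_derivative (\<lambda>h. g z \<bullet> h)) (at z)"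
    and mu: "mu1 \<ge> 0" "mu2 \<ge> 0"
  shows "Floc mu1 mu2 f i a0 b0 + (fst (g (a0, b0)) + mu1 *\<^sub>R a0) \<bullet> (a - a0)
      + (snd (g (a0, b0)) + mu2 *\<^sub>R b0) \<bullet> (b - b0) \<le> Floc mu1 mu2 f i a b"
proof -
  obtain ga gb where g: "g (a0, b0) = (ga, gb)" by fastforce
  have "f i (a0, b0) + g (a0, b0) \<bullet> ((a, b) - (a0, b0)) \<le> f i (a, b)"
    by (rule convex_on_gradient_inequality[OF cvx d])
  then have "f i (a0, b0) + ga \<bullet> (a - a0) + gb \<bullet> (b - b0) \<le> f i (a, b)"
    by (simp add: g)
  moreover have quad: "mu * (x0 \<bullet> (x - x0)) \<le> mu/2 * (norm x)\<^sup>2 - mu/2 * (norm x0)\<^sup>2"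
    if "mu \<ge> 0" for mu and x x0 :: "'z::real_inner"
    using scaled_inner_diff_eq[of mu x0 x] that by simp
  ultimately show ?thesis
    using quad[OF mu(1), of a0 a] quad[OF mu(2), of b0 b]
    unfolding Floc_def g fst_conv snd_conv inner_add_left inner_scaleR_left by linarith
qed

text \<open>Convexity is used at the intermediate point \<open>(x', y)\<close>, the descent lemma only along
  the \<open>y\<close>-direction from there.\<close>
lemma convex_lipschitz_three_point:
  fixes \<phi> :: "'a::real_inner \<times> 'b::real_inner \<Rightarrow> real"
  assumes cvx: "convex_on UNIV \<phi>" and d: "\<And>z. (\<phi> has_derivative (\<lambda>h. g z \<bullet> h)) (at z)"
    and lip: "\<And>z z'. norm (g z - g z') \<le> C * norm (z - z')"
  shows "\<phi> (x', y') - \<phi> (xs, ys)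
    \<le> fst (g (x', y)) \<bullet> (x' - xs) + snd (g (x', y)) \<bullet> (y' - ys) + C/2 * (norm (y' - y))\<^sup>2"
proof -
  have "\<phi> (x', y') \<le> \<phi> (x', y) + g (x', y) \<bullet> ((x', y') - (x', y)) + C/2 * (norm ((x', y') - (x', y)))\<^sup>2"
    by (rule lipschitz_gradient_upper_bound[OF d lip])
  moreover have "\<phi> (x', y) + g (x', y) \<bullet> ((xs, ys) - (x', y)) \<le> \<phi> (xs, ys)"
    by (rule convex_on_gradient_inequality[OF cvx d])
  ultimately show ?thesis
    by (cases "g (x', y)") (simp add: inner_diff_right algebra_simps)
qed

lemma Floc_three_point:
  assumes cvx: "convex_on UNIV (f i)" and d: "\<And>z. (f i has_derivative (\<lambda>h. g z \<bullet> h)) (at z)"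
    and lip: "\<And>z z'. norm (g z - g z') \<le> C * norm (z - z')"
    and mu1: "mu1 \<ge> 0" and m: "m > 0" "m \<le> mu2"
  shows "Floc mu1 mu2 f i x' y' - Floc mu1 mu2 f i xs ys
     \<le> (fst (g (x', y)) + mu1 *\<^sub>R x') \<bullet> (x' - xs) + (snd (g (x', y')) + mu2 *\<^sub>R y') \<bullet> (y' - ys)
       + C * (C + m) / (2 * m) * (norm (y' - y))\<^sup>2"
proof -
  define gy gy' where "gy = snd (g (x', y))" and "gy' = snd (g (x', y'))"
  have "norm (gy - gy') \<le> norm (g (x', y) - g (x', y'))"
    unfolding gy_def gy'_def by (metis norm_snd_le prod.collapse snd_diff)
  also have "\<dots> \<le> C * norm (y' - y)"
    using lip[of "(x', y)" "(x', y')"] by (simp add: norm_minus_commute)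
  finally have "(gy - gy') \<bullet> (y' - ys) \<le> C * norm (y' - y) * norm (y' - ys)"
    using order_trans[OF norm_cauchy_schwarz mult_right_mono[OF _ norm_ge_zero]] by blast
  also have "\<dots> \<le> m/2 * (norm (y' - ys))\<^sup>2 + C\<^sup>2 / (2 * m) * (norm (y' - y))\<^sup>2"
    by (rule mult_le_weighted_squares[OF m(1)])
  finally have cross: "gy \<bullet> (y' - ys)
      \<le> gy' \<bullet> (y' - ys) + m/2 * (norm (y' - ys))\<^sup>2 + C\<^sup>2 / (2 * m) * (norm (y' - y))\<^sup>2"
    by (simp add: inner_diff_left)
  have "mu1 * (x' \<bullet> (x' - xs)) = - (mu1 * (x' \<bullet> (xs - x')))"
    by (simp add: inner_diff_right algebra_simps)
  moreover have "0 \<le> mu1/2 * (norm (xs - x'))\<^sup>2" using mu1 by simp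
  ultimately have quad_x: "mu1/2 * (norm x')\<^sup>2 - mu1/2 * (norm xs)\<^sup>2 \<le> mu1 * (x' \<bullet> (x' - xs))"
    using scaled_inner_diff_eq[of mu1 x' xs] by linarith
  have "m/2 * (norm (y' - ys))\<^sup>2 \<le> mu2/2 * (norm (y' - ys))\<^sup>2"
    using m by (intro mult_right_mono) auto
  then have quad_y: "mu2/2 * (norm y')\<^sup>2 - mu2/2 * (norm ys)\<^sup>2
      \<le> mu2 * (y' \<bullet> (y' - ys)) - m/2 * (norm (y' - ys))\<^sup>2"
    using scaled_inner_diff_eq[of mu2 y' ys] by (simp add: norm_minus_commute inner_diff_right right_diff_distrib)
  have "C * (C + m) / (2 * m) * (norm (y' - y))\<^sup>2
      = C/2 * (norm (y' - y))\<^sup>2 + C\<^sup>2 / (2 * m) * (norm (y' - y))\<^sup>2"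
    using m by (simp add: field_simps power2_eq_square)
  then show ?thesis
    using convex_lipschitz_three_point[OF cvx d lip, of x' y' xs ys y] cross quad_x quad_y
    unfolding Floc_def inner_add_left inner_scaleR_left gy_def gy'_def by linarith
qed

lemma multiplier_update_bound:
  fixes l a :: "'a::real_inner"
  assumes gamma: "0 < gamma" "gamma \<le> 2" and rho: "rho > 0"
  shows "l \<bullet> a - rho * (norm a)\<^sup>2 \<le> ((norm l)\<^sup>2 - (norm (l - (gamma * rho) *\<^sub>R a))\<^sup>2) / (2 * gamma * rho)"
proof -
  have "(norm (l - (gamma * rho) *\<^sub>R a))\<^sup>2
      = (norm l)\<^sup>2 + (gamma * rho)\<^sup>2 * (norm a)\<^sup>2 - 2 * (gamma * rho) * (l \<bullet> a)"
    using dot_norm_neg[of l "(gamma * rho) *\<^sub>R a"] by (simp add: power_mult_distrib)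
  then have "((norm l)\<^sup>2 - (norm (l - (gamma * rho) *\<^sub>R a))\<^sup>2) / (2 * gamma * rho)
      = l \<bullet> a - gamma * rho / 2 * (norm a)\<^sup>2"
    using gamma rho by (simp add: field_simps power2_eq_square)
  moreover have "gamma * rho / 2 * (norm a)\<^sup>2 \<le> rho * (norm a)\<^sup>2"
    using gamma rho by (intro mult_right_mono) auto
  ultimately show ?thesis by linarith
qed

lemma sum_inner_deviation_from_mean:
  fixes z :: "'b \<Rightarrow> 'a::real_inner"
  assumes "finite A" "A \<noteq> {}"
  shows "(\<Sum>j\<in>A. G \<bullet> (z j - (1 / real (card A)) *\<^sub>R (\<Sum>l\<in>A. z l))) = 0"
  using assms by (simp add: inner_diff_right sum_subtractf inner_sum_right[symmetric])

text \<open>The entry of the edge-node incidence matrix \<open>A\<close> in row \<open>e\<close> and block column \<open>i\<close>.\<close>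
definition incidence :: "nat \<times> nat \<Rightarrow> nat \<Rightarrow> real" where
  "incidence e i = of_bool (fst e = i) - of_bool (snd e = i)"

lemma graph_okD:
  assumes "graph_ok N E"
  shows "finite E" and "e \<in> E \<Longrightarrow> fst e \<in> vset N" and "e \<in> E \<Longrightarrow> snd e \<in> vset N"
    and "e \<in> E \<Longrightarrow> fst e \<noteq> snd e"
proof -
  have "E \<subseteq> vset N \<times> vset N" using assms by (auto simp: graph_ok_def vset_def)
  then show "finite E" "e \<in> E \<Longrightarrow> fst e \<in> vset N" "e \<in> E \<Longrightarrow> snd e \<in> vset N"
    by (auto simp: vset_def intro: finite_subset)
  show "e \<in> E \<Longrightarrow> fst e \<noteq> snd e" using assms by (auto simp: graph_ok_def)
qed

lemma sum_incidence:
  fixes g :: "nat \<Rightarrow> 'a::real_vector"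
  assumes "graph_ok N E" "e \<in> E"
  shows "(\<Sum>i\<in>vset N. incidence e i *\<^sub>R g i) = g (fst e) - g (snd e)"
proof -
  have "(\<Sum>i\<in>vset N. of_bool (a = i) *\<^sub>R g i) = g a" if "a \<in> vset N" for a
    using that by (simp add: of_bool_def if_distrib[of "\<lambda>c. c *\<^sub>R _"] vset_def cong: if_cong)
  then show ?thesis
    using graph_okD[OF assms(1)] assms(2)
    by (simp add: incidence_def scaleR_diff_left sum_subtractf)
qed

lemma ATlam_eq_sum_incidence:
  assumes "finite E"
  shows "ATlam E l i = (\<Sum>e\<in>E. incidence e i *\<^sub>R l e)"
  using assms
  by (simp add: ATlam_def incidence_def scaleR_diff_left sum_subtractf sum.inter_filter of_bool_def
      if_distrib[of "\<lambda>c. c *\<^sub>R _"] cong: if_cong)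

lemma sum_inner_ATlam:
  assumes "graph_ok N E"
  shows "(\<Sum>i\<in>vset N. ATlam E l i \<bullet> d i) = (\<Sum>e\<in>E. l e \<bullet> Ablk d e)"
proof -
  have "(\<Sum>i\<in>vset N. ATlam E l i \<bullet> d i) = (\<Sum>e\<in>E. \<Sum>i\<in>vset N. incidence e i *\<^sub>R (l e \<bullet> d i))"
    unfolding ATlam_eq_sum_incidence[OF graph_okD(1)[OF assms]]
    by (subst sum.swap) (simp add: inner_sum_left)
  also have "\<dots> = (\<Sum>e\<in>E. l e \<bullet> Ablk d e)"
  proof (intro sum.cong refl)
    fix e assume "e \<in> E"
    from sum_incidence[OF assms this, of "\<lambda>i. l e \<bullet> d i"]
    show "(\<Sum>i\<in>vset N. incidence e i *\<^sub>R (l e \<bullet> d i)) = l e \<bullet> Ablk d e"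
      by (simp add: Ablk_def inner_diff_right)
  qed
  finally show ?thesis .
qed

lemma Ablk_fun_upd: "Ablk (X(i := w)) e = Ablk X e + incidence e i *\<^sub>R (w - X i)"
  by (auto simp: Ablk_def incidence_def)

lemma sum_deg_mult:
  assumes "graph_ok N E"
  shows "(\<Sum>i\<in>vset N. real (deg E i) * c i) = (\<Sum>e\<in>E. c (fst e) + c (snd e))"
proof -
  have "(\<Sum>i\<in>vset N. real (deg E i) * c i) = (\<Sum>i\<in>vset N. \<Sum>e\<in>{e\<in>E. fst e = i \<or> snd e = i}. c i)"
    by (simp add: deg_def)
  also have "\<dots> = (\<Sum>e\<in>E. \<Sum>i\<in>{i\<in>vset N. fst e = i \<or> snd e = i}. c i)"
    by (rule sum.swap_restrict) (simp_all add: vset_def graph_okD(1)[OF assms])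
  also have "\<dots> = (\<Sum>e\<in>E. c (fst e) + c (snd e))"
  proof (intro sum.cong refl)
    fix e assume "e \<in> E"
    then have "{i\<in>vset N. fst e = i \<or> snd e = i} = {fst e, snd e}" "fst e \<noteq> snd e"
      using graph_okD(2-4)[OF assms \<open>e \<in> E\<close>] by auto
    then show "(\<Sum>i\<in>{i\<in>vset N. fst e = i \<or> snd e = i}. c i) = c (fst e) + c (snd e)"
      by simp
  qed
  finally show ?thesis .
qed

lemma G1dag_qf_eq:
  assumes "graph_ok N E"
  shows "G1dag_qf N E rho P W
    = (\<Sum>i\<in>vset N. wnorm2 (W i) (P i)) + 2 * rho * (\<Sum>e\<in>E. W (fst e) \<bullet> W (snd e))"
proof -
  have "(norm (W (fst e)))\<^sup>2 + (norm (W (snd e)))\<^sup>2 - (norm (Ablk W e))\<^sup>2 = 2 * (W (fst e) \<bullet> W (snd e))" for e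
    using dot_norm_neg[of "W (fst e)" "W (snd e)"] by (simp add: Ablk_def)
  then have "(\<Sum>e\<in>E. (norm (W (fst e)))\<^sup>2 + (norm (W (snd e)))\<^sup>2) - (\<Sum>e\<in>E. (norm (Ablk W e))\<^sup>2)
      = 2 * (\<Sum>e\<in>E. W (fst e) \<bullet> W (snd e))"
    by (simp add: sum_subtractf[symmetric] sum_distrib_left)
  from arg_cong[OF this, of "\<lambda>t. rho * t"]
  have edges: "rho * (\<Sum>e\<in>E. (norm (W (fst e)))\<^sup>2 + (norm (W (snd e)))\<^sup>2) - rho * (\<Sum>e\<in>E. (norm (Ablk W e))\<^sup>2)
      = 2 * rho * (\<Sum>e\<in>E. W (fst e) \<bullet> W (snd e))"
    by (simp add: right_diff_distrib)
  have "(\<Sum>i\<in>vset N. rho * real (deg E i) * (norm (W i))\<^sup>2)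
      = rho * (\<Sum>i\<in>vset N. real (deg E i) * (norm (W i))\<^sup>2)"
    by (simp add: sum_distrib_left mult.assoc)
  also have "\<dots> = rho * (\<Sum>e\<in>E. (norm (W (fst e)))\<^sup>2 + (norm (W (snd e)))\<^sup>2)"
    by (simp only: sum_deg_mult[OF assms])
  finally show ?thesis
    using edges unfolding G1dag_qf_def G1_qf_def sum.distrib by linarith
qed

lemma Ftot_fun_upd:
  assumes "i \<in> vset N"
  shows "Ftot N mu1 mu2 f (X(i := w)) Y
    = Floc mu1 mu2 f i w (Y i) + (\<Sum>l\<in>vset N - {i}. Floc mu1 mu2 f l (X l) (Y l))"
  unfolding Ftot_def using assms
  by (subst sum.remove[of _ i]) (auto simp: vset_def intro!: sum.cong)

lemma x_update_optimality:
  assumes i: "i \<in> vset N"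
    and d: "\<And>z. (f i has_derivative (\<lambda>h. g z \<bullet> h)) (at z)" and sym: "transpose (P i) = P i"
    and min: "\<And>w. Lrho N E mu1 mu2 f rho (X(i := u)) Y l + 1/2 * wnorm2 (u - X i) (P i)
                 \<le> Lrho N E mu1 mu2 f rho (X(i := w)) Y l + 1/2 * wnorm2 (w - X i) (P i)"
    and finE: "finite E"
  shows "fst (g (u, Y i)) + mu1 *\<^sub>R u
    = ATlam E l i - rho *\<^sub>R (\<Sum>e\<in>E. incidence e i *\<^sub>R Ablk (X(i := u)) e) - P i *v (u - X i)"
proof -
  define \<psi> where "\<psi> w = Lrho N E mu1 mu2 f rho (X(i := w)) Y l + 1/2 * wnorm2 (w - X i) (P i)" for w
  define K where "K = (\<Sum>j\<in>vset N - {i}. Floc mu1 mu2 f j (X j) (Y j))"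
  have \<psi>_eq: "\<psi> = (\<lambda>w. Floc mu1 mu2 f i w (Y i) + K
      - (\<Sum>e\<in>E. l e \<bullet> (Ablk X e + incidence e i *\<^sub>R (w - X i)))
      + rho/2 * (\<Sum>e\<in>E. (Ablk X e + incidence e i *\<^sub>R (w - X i)) \<bullet> (Ablk X e + incidence e i *\<^sub>R (w - X i)))
      + 1/2 * wnorm2 (w - X i) (P i))"
    by (simp add: fun_eq_iff \<psi>_def K_def Lrho_def Ftot_fun_upd[OF i] Ablk_fun_upd power2_norm_eq_inner)
  define G where "G = fst (g (u, Y i)) + mu1 *\<^sub>R u - ATlam E l i
    + rho *\<^sub>R (\<Sum>e\<in>E. incidence e i *\<^sub>R Ablk (X(i := u)) e) + P i *v (u - X i)"
  have "(\<psi> has_derivative (\<lambda>h. G \<bullet> h)) (at u)"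
    unfolding \<psi>_eq
    by (rule derivative_eq_intros has_derivative_Floc_fst[where f=f and i=i, OF d]
          has_derivative_wnorm2[OF sym] refl
        | simp add: G_def ATlam_eq_sum_incidence[OF finE] Ablk_fun_upd fun_eq_iff inner_add_left
            inner_diff_left inner_sum_left inner_add_right inner_diff_right inner_sum_right
            sum_distrib_left inner_commute algebra_simps)+
  then have "G = 0"
    by (rule gradient_eq_0_at_minimum[rotated]) (unfold \<psi>_def, rule min)
  then show ?thesis
    unfolding G_def by (simp add: algebra_simps)
qed

lemma y_update_optimality:
  assumes d: "\<And>z. (f i has_derivative (\<lambda>h. g z \<bullet> h)) (at z)" and sym: "transpose Q = Q"
    and min: "\<And>w. Floc mu1 mu2 f i c v + 1/2 * wnorm2 (v - b) Q \<le> Floc mu1 mu2 f i c w + 1/2 * wnorm2 (w - b) Q"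
  shows "snd (g (c, v)) + mu2 *\<^sub>R v = - (Q *v (v - b))"
proof -
  have "((\<lambda>w. Floc mu1 mu2 f i c w + 1/2 * wnorm2 (w - b) Q) has_derivative
      (\<lambda>h. (snd (g (c, v)) + mu2 *\<^sub>R v + Q *v (v - b)) \<bullet> h)) (at v)"
    by (rule derivative_eq_intros has_derivative_Floc_snd[where f=f and i=i, OF d]
          has_derivative_wnorm2[OF sym] refl
        | simp add: fun_eq_iff inner_add_left)+
  then have "snd (g (c, v)) + mu2 *\<^sub>R v + Q *v (v - b) = 0"
    by (rule gradient_eq_0_at_minimum[rotated]) (rule min)
  then show ?thesis by (simp add: eq_neg_iff_add_eq_0)
qed

lemma edge_coupling_identity:
  fixes a b a' b' s :: "'a::real_inner"
  shows "(a' - b) \<bullet> (a' - s) - (a - b') \<bullet> (b' - s)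
    = (norm (a' - b'))\<^sup>2 + (a' - s) \<bullet> (b' - s) + (a' - a) \<bullet> (b' - b) - (a - s) \<bullet> (b - s)"
  by (simp add: power2_norm_eq_inner inner_diff_left inner_diff_right inner_commute algebra_simps)

lemma sum_wnorm2_polarization:
  assumes "\<And>i. i \<in> vset N \<Longrightarrow> transpose (S i) = S i"
  shows "(\<Sum>i\<in>vset N. (S i *v (a i - b i)) \<bullet> (a i - c i))
    = 1/2 * ((\<Sum>i\<in>vset N. wnorm2 (a i - c i) (S i)) + (\<Sum>i\<in>vset N. wnorm2 (a i - b i) (S i))
             - (\<Sum>i\<in>vset N. wnorm2 (b i - c i) (S i)))"
proof -
  have "(\<Sum>i\<in>vset N. (S i *v (a i - b i)) \<bullet> (a i - c i))
      = (\<Sum>i\<in>vset N. 1/2 * (wnorm2 (a i - c i) (S i) + wnorm2 (a i - b i) (S i) - wnorm2 (b i - c i) (S i)))"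
    by (intro sum.cong refl wnorm2_polarization assms)
  then show ?thesis
    by (simp only: sum_distrib_left[symmetric] sum.distrib sum_subtractf)
qed

text \<open>Node \<open>i\<close> updates its block against the old blocks of its neighbours; this is why
  the penalty and proximal terms combine into \<open>G1dag = G1 - rho A\<^sup>T A\<close> rather than \<open>G1\<close>.\<close>
lemma x_update_coupling_identity:
  assumes graph: "graph_ok N E" and feas: "\<forall>e\<in>E. Ablk Xs e = 0"
    and sym: "\<And>i. i \<in> vset N \<Longrightarrow> transpose (P i) = P i"
  shows "(\<Sum>i\<in>vset N. (rho *\<^sub>R (\<Sum>e\<in>E. incidence e i *\<^sub>R Ablk (X(i := X' i)) e) + P i *v (X' i - X i))
            \<bullet> (X' i - Xs i))
    = rho * (\<Sum>e\<in>E. (norm (Ablk X' e))\<^sup>2)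
      + 1/2 * (G1dag_qf N E rho P (\<lambda>i. X' i - Xs i) + G1dag_qf N E rho P (\<lambda>i. X' i - X i)
               - G1dag_qf N E rho P (\<lambda>i. X i - Xs i))"
proof -
  define dx Dx wx where "dx = (\<lambda>i. X' i - Xs i)" and "Dx = (\<lambda>i. X' i - X i)" and "wx = (\<lambda>i. X i - Xs i)"
  have "(\<Sum>i\<in>vset N. (\<Sum>e\<in>E. incidence e i *\<^sub>R Ablk (X(i := X' i)) e) \<bullet> dx i)
      = (\<Sum>e\<in>E. \<Sum>i\<in>vset N. incidence e i *\<^sub>R (Ablk (X(i := X' i)) e \<bullet> dx i))"
    by (subst sum.swap) (simp add: inner_sum_left)
  also have "\<dots> = (\<Sum>e\<in>E. (norm (Ablk X' e))\<^sup>2 + dx (fst e) \<bullet> dx (snd e) + Dx (fst e) \<bullet> Dx (snd e)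
      - wx (fst e) \<bullet> wx (snd e))"
  proof (intro sum.cong refl)
    fix e assume e: "e \<in> E"
    then have "fst e \<noteq> snd e" "Xs (fst e) = Xs (snd e)"
      using graph_okD(4)[OF graph] feas by (auto simp: Ablk_def)
    then show "(\<Sum>i\<in>vset N. incidence e i *\<^sub>R (Ablk (X(i := X' i)) e \<bullet> dx i))
        = (norm (Ablk X' e))\<^sup>2 + dx (fst e) \<bullet> dx (snd e) + Dx (fst e) \<bullet> Dx (snd e) - wx (fst e) \<bullet> wx (snd e)"
      using sum_incidence[OF graph e, of "\<lambda>i. Ablk (X(i := X' i)) e \<bullet> dx i"]
        edge_coupling_identity[of "X' (fst e)" "X (snd e)" "Xs (fst e)" "X (fst e)" "X' (snd e)"]
      by (simp add: Ablk_def dx_def Dx_def wx_def)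
  qed
  finally have penalty: "(\<Sum>i\<in>vset N. (\<Sum>e\<in>E. incidence e i *\<^sub>R Ablk (X(i := X' i)) e) \<bullet> dx i)
      = (\<Sum>e\<in>E. (norm (Ablk X' e))\<^sup>2) + (\<Sum>e\<in>E. dx (fst e) \<bullet> dx (snd e))
        + (\<Sum>e\<in>E. Dx (fst e) \<bullet> Dx (snd e)) - (\<Sum>e\<in>E. wx (fst e) \<bullet> wx (snd e))"
    by (simp add: sum.distrib sum_subtractf)
  have proximal: "(\<Sum>i\<in>vset N. (P i *v Dx i) \<bullet> dx i)
      = 1/2 * ((\<Sum>i\<in>vset N. wnorm2 (dx i) (P i)) + (\<Sum>i\<in>vset N. wnorm2 (Dx i) (P i))
               - (\<Sum>i\<in>vset N. wnorm2 (wx i) (P i)))"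
    unfolding dx_def Dx_def wx_def by (rule sum_wnorm2_polarization[OF sym])
  have "(\<Sum>i\<in>vset N. (rho *\<^sub>R (\<Sum>e\<in>E. incidence e i *\<^sub>R Ablk (X(i := X' i)) e) + P i *v Dx i) \<bullet> dx i)
      = rho * (\<Sum>i\<in>vset N. (\<Sum>e\<in>E. incidence e i *\<^sub>R Ablk (X(i := X' i)) e) \<bullet> dx i)
        + (\<Sum>i\<in>vset N. (P i *v Dx i) \<bullet> dx i)"
    by (simp add: inner_add_left sum.distrib sum_distrib_left)
  also have "\<dots> = rho * (\<Sum>e\<in>E. (norm (Ablk X' e))\<^sup>2)
      + 1/2 * (G1dag_qf N E rho P dx + G1dag_qf N E rho P Dx - G1dag_qf N E rho P wx)"
    unfolding penalty proximal G1dag_qf_eq[OF graph] by (simp add: algebra_simps)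
  finally show ?thesis unfolding dx_def Dx_def wx_def .
qed

lemma Floc_mean_le:
  assumes cvx: "convex_on UNIV (f i)" and d: "\<And>z. (f i has_derivative (\<lambda>h. g z \<bullet> h)) (at z)"
    and mu: "mu1 \<ge> 0" "mu2 \<ge> 0" and A: "finite A" "A \<noteq> {}"
  shows "Floc mu1 mu2 f i ((1 / real (card A)) *\<^sub>R (\<Sum>j\<in>A. a j)) ((1 / real (card A)) *\<^sub>R (\<Sum>j\<in>A. b j))
    \<le> (1 / real (card A)) * (\<Sum>j\<in>A. Floc mu1 mu2 f i (a j) (b j))"
proof -
  define a0 b0 where "a0 = (1 / real (card A)) *\<^sub>R (\<Sum>j\<in>A. a j)" and "b0 = (1 / real (card A)) *\<^sub>R (\<Sum>j\<in>A. b j)"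
  define ga gb where "ga = fst (g (a0, b0)) + mu1 *\<^sub>R a0" and "gb = snd (g (a0, b0)) + mu2 *\<^sub>R b0"
  have "(\<Sum>j\<in>A. Floc mu1 mu2 f i a0 b0 + ga \<bullet> (a j - a0) + gb \<bullet> (b j - b0))
      \<le> (\<Sum>j\<in>A. Floc mu1 mu2 f i (a j) (b j))"
    unfolding ga_def gb_def by (intro sum_mono Floc_gradient_inequality[where f=f and i=i, OF cvx d mu])
  moreover have "(\<Sum>j\<in>A. ga \<bullet> (a j - a0)) = 0" "(\<Sum>j\<in>A. gb \<bullet> (b j - b0)) = 0"
    unfolding a0_def b0_def by (intro sum_inner_deviation_from_mean A)+
  ultimately have "real (card A) * Floc mu1 mu2 f i a0 b0 \<le> (\<Sum>j\<in>A. Floc mu1 mu2 f i (a j) (b j))"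
    by (simp add: sum.distrib)
  moreover have "real (card A) > 0" using A by (simp add: card_gt_0_iff)
  ultimately show ?thesis
    by (simp add: a0_def b0_def field_simps)
qed

lemma Ftot_mean_le:
  assumes cvx: "\<And>i. i \<in> vset N \<Longrightarrow> convex_on UNIV (f i)"
    and d: "\<And>i z. i \<in> vset N \<Longrightarrow> (f i has_derivative (\<lambda>h. g i z \<bullet> h)) (at z)"
    and mu: "mu1 \<ge> 0" "mu2 \<ge> 0" and k: "k \<ge> 1"
  shows "Ftot N mu1 mu2 f (\<lambda>i. (1 / real k) *\<^sub>R (\<Sum>j=1..k. X j i)) (\<lambda>i. (1 / real k) *\<^sub>R (\<Sum>j=1..k. Y j i))
    \<le> (1 / real k) * (\<Sum>j=1..k. Ftot N mu1 mu2 f (X j) (Y j))"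
proof -
  have "Ftot N mu1 mu2 f (\<lambda>i. (1 / real k) *\<^sub>R (\<Sum>j=1..k. X j i)) (\<lambda>i. (1 / real k) *\<^sub>R (\<Sum>j=1..k. Y j i))
      \<le> (\<Sum>i\<in>vset N. (1 / real k) * (\<Sum>j=1..k. Floc mu1 mu2 f i (X j i) (Y j i)))"
    unfolding Ftot_def
  proof (intro sum_mono)
    fix i assume i: "i \<in> vset N"
    show "Floc mu1 mu2 f i ((1 / real k) *\<^sub>R (\<Sum>j=1..k. X j i)) ((1 / real k) *\<^sub>R (\<Sum>j=1..k. Y j i))
        \<le> (1 / real k) * (\<Sum>j=1..k. Floc mu1 mu2 f i (X j i) (Y j i))"
      using Floc_mean_le[where f=f and i=i and A="{1..k}", OF cvx[OF i] d[OF i] mu] k by simp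
  qed
  also have "\<dots> = (1 / real k) * (\<Sum>j=1..k. Ftot N mu1 mu2 f (X j) (Y j))"
    unfolding Ftot_def sum_distrib_left[symmetric] by (subst sum.swap) simp
  finally show ?thesis .
qed

lemma posdef_blk_imp_nonneg:
  assumes "posdef_blk N q" and "\<And>W. \<forall>i\<in>vset N. W i = 0 \<Longrightarrow> q W = 0"
  shows "q W \<ge> 0"
  using assms unfolding posdef_blk_def by (cases "\<exists>i\<in>vset N. W i \<noteq> 0") force+

lemma lipschitz_constant_nonneg:
  fixes g :: "'a::real_normed_vector \<Rightarrow> 'b::real_normed_vector" and z z' :: 'a
  assumes "\<And>z z'. norm (g z - g z') \<le> C * norm (z - z')" and "z \<noteq> z'"
  shows "C \<ge> 0"
  using order_trans[OF norm_ge_zero assms(1)[of z z']] assms(2) by (simp add: zero_le_mult_iff)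

locale prox_admm_iterates =
  fixes N :: nat and E :: "(nat \<times> nat) set"
    and f :: "nat \<Rightarrow> (real^'n) \<times> (real^'n) \<Rightarrow> real"
    and grad :: "nat \<Rightarrow> (real^'n) \<times> (real^'n) \<Rightarrow> (real^'n) \<times> (real^'n)"
    and C :: "nat \<Rightarrow> real" and mu1 mu2 m rho gamma :: real
    and P Q :: "nat \<Rightarrow> real^'n^'n"
    and Wc Wh :: "nat \<Rightarrow> nat \<Rightarrow> real^'n" and lam :: "nat \<Rightarrow> nat \<times> nat \<Rightarrow> real^'n"
  assumes graph: "graph_ok N E"
    and diff: "\<And>i z. i \<in> vset N \<Longrightarrow> (f i has_derivative (\<lambda>h. grad i z \<bullet> h)) (at z)"
    and cvx: "\<And>i. i \<in> vset N \<Longrightarrow> convex_on UNIV (f i)"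
    and lip: "\<And>i z z'. i \<in> vset N \<Longrightarrow> norm (grad i z - grad i z') \<le> C i * norm (z - z')"
    and mu1: "mu1 \<ge> 0" and m: "0 < m" "m \<le> mu2"
    and rho: "rho > 0" and gamma: "0 < gamma" "gamma \<le> 2"
    and Psym: "\<And>i. i \<in> vset N \<Longrightarrow> transpose (P i) = P i"
    and Qsym: "\<And>i. i \<in> vset N \<Longrightarrow> transpose (Q i) = Q i"
    and G1dag_nonneg: "\<And>W. 0 \<le> G1dag_qf N E rho P W"
    and G3_le_G2: "\<And>W. G3_qf N C m W \<le> G2_qf N Q W"
    and x_update: "\<And>j i w. i \<in> vset N \<Longrightarrow>
        Lrho N E mu1 mu2 f rho ((Wc j)(i := Wc (Suc j) i)) (Wh j) (lam j)
          + 1/2 * wnorm2 (Wc (Suc j) i - Wc j i) (P i)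
        \<le> Lrho N E mu1 mu2 f rho ((Wc j)(i := w)) (Wh j) (lam j) + 1/2 * wnorm2 (w - Wc j i) (P i)"
    and multiplier_update: "\<And>j e. e \<in> E \<Longrightarrow>
        lam (Suc j) e = lam j e - (gamma * rho) *\<^sub>R Ablk (Wc (Suc j)) e"
    and y_update: "\<And>j i w. i \<in> vset N \<Longrightarrow>
        Floc mu1 mu2 f i (Wc (Suc j) i) (Wh (Suc j) i) + 1/2 * wnorm2 (Wh (Suc j) i - Wh j i) (Q i)
        \<le> Floc mu1 mu2 f i (Wc (Suc j) i) w + 1/2 * wnorm2 (w - Wh j i) (Q i)"
begin

lemma G2_nonneg: "0 \<le> G2_qf N Q W"
proof -
  have "0 \<le> C i" if "i \<in> vset N" for i
  proof (rule lipschitz_constant_nonneg[OF lip[OF that]])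
    show "((0::real^'n), (0::real^'n)) \<noteq> (1, 0)" by (simp add: vec_eq_iff)
  qed
  then have "0 \<le> G3_qf N C m W"
    unfolding G3_qf_def using m by (intro sum_nonneg) auto
  then show ?thesis using G3_le_G2[of W] by linarith
qed

definition lyapunov :: "(nat \<Rightarrow> real^'n) \<Rightarrow> (nat \<Rightarrow> real^'n) \<Rightarrow> nat \<Rightarrow> real" where
  "lyapunov Wcs Whs j = G1dag_qf N E rho P (\<lambda>i. Wc j i - Wcs i) + G2_qf N Q (\<lambda>i. Wh j i - Whs i)
     + (\<Sum>e\<in>E. (norm (lam j e))\<^sup>2) / (gamma * rho)"

lemma lyapunov_nonneg: "0 \<le> lyapunov Wcs Whs j"
  unfolding lyapunov_def using G1dag_nonneg G2_nonneg gamma rho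
  by (intro add_nonneg_nonneg divide_nonneg_pos sum_nonneg) auto

lemma node_gap:
  assumes i: "i \<in> vset N"
  shows "Floc mu1 mu2 f i (Wc (Suc j) i) (Wh (Suc j) i) - Floc mu1 mu2 f i (Wcs i) (Whs i)
    \<le> (ATlam E (lam j) i - (rho *\<^sub>R (\<Sum>e\<in>E. incidence e i *\<^sub>R Ablk ((Wc j)(i := Wc (Suc j) i)) e)
          + P i *v (Wc (Suc j) i - Wc j i))) \<bullet> (Wc (Suc j) i - Wcs i)
      - (Q i *v (Wh (Suc j) i - Wh j i)) \<bullet> (Wh (Suc j) i - Whs i)
      + C i * (C i + m) / (2 * m) * (norm (Wh (Suc j) i - Wh j i))\<^sup>2"
proof -
  have "fst (grad i (Wc (Suc j) i, Wh j i)) + mu1 *\<^sub>R Wc (Suc j) i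
      = ATlam E (lam j) i - rho *\<^sub>R (\<Sum>e\<in>E. incidence e i *\<^sub>R Ablk ((Wc j)(i := Wc (Suc j) i)) e)
        - P i *v (Wc (Suc j) i - Wc j i)"
    by (rule x_update_optimality[where f=f and i=i and g="grad i" and P=P and X="Wc j" and Y="Wh j" and l="lam j",
          OF i diff[OF i] Psym[OF i] x_update[OF i] graph_okD(1)[OF graph]])
  moreover have "snd (grad i (Wc (Suc j) i, Wh (Suc j) i)) + mu2 *\<^sub>R Wh (Suc j) i
      = - (Q i *v (Wh (Suc j) i - Wh j i))"
    by (rule y_update_optimality[where f=f and i=i and g="grad i" and Q="Q i",
          OF diff[OF i] Qsym[OF i] y_update[OF i]])
  ultimately show ?thesis
    using Floc_three_point[where f=f and i=i, OF cvx[OF i] diff[OF i] lip[OF i] mu1 m,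
        of "Wc (Suc j) i" "Wh (Suc j) i" "Wcs i" "Whs i" "Wh j i"]
    by (simp add: diff_diff_eq)
qed

lemma objective_gap_step:
  assumes feas: "\<forall>e\<in>E. Ablk Wcs e = 0"
  shows "Ftot N mu1 mu2 f (Wc (Suc j)) (Wh (Suc j)) - Ftot N mu1 mu2 f Wcs Whs
    \<le> (\<Sum>e\<in>E. lam j e \<bullet> Ablk (Wc (Suc j)) e) - rho * (\<Sum>e\<in>E. (norm (Ablk (Wc (Suc j)) e))\<^sup>2)
      + 1/2 * (G1dag_qf N E rho P (\<lambda>i. Wc j i - Wcs i) - G1dag_qf N E rho P (\<lambda>i. Wc (Suc j) i - Wcs i)
               - G1dag_qf N E rho P (\<lambda>i. Wc (Suc j) i - Wc j i))
      + 1/2 * (G2_qf N Q (\<lambda>i. Wh j i - Whs i) - G2_qf N Q (\<lambda>i. Wh (Suc j) i - Whs i))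
      - 1/2 * (G2_qf N Q (\<lambda>i. Wh (Suc j) i - Wh j i) - G3_qf N C m (\<lambda>i. Wh (Suc j) i - Wh j i))"
proof -
  define X' X Y' Y where "X' = Wc (Suc j)" and "X = Wc j" and "Y' = Wh (Suc j)" and "Y = Wh j"
  define pen where "pen i = rho *\<^sub>R (\<Sum>e\<in>E. incidence e i *\<^sub>R Ablk (X(i := X' i)) e) + P i *v (X' i - X i)"
    for i
  have "Ftot N mu1 mu2 f X' Y' - Ftot N mu1 mu2 f Wcs Whs
      = (\<Sum>i\<in>vset N. Floc mu1 mu2 f i (X' i) (Y' i) - Floc mu1 mu2 f i (Wcs i) (Whs i))"
    by (simp add: Ftot_def sum_subtractf)
  also have "\<dots> \<le> (\<Sum>i\<in>vset N. (ATlam E (lam j) i - pen i) \<bullet> (X' i - Wcs i)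
      - (Q i *v (Y' i - Y i)) \<bullet> (Y' i - Whs i) + C i * (C i + m) / (2 * m) * (norm (Y' i - Y i))\<^sup>2)"
    unfolding X'_def X_def Y'_def Y_def pen_def by (intro sum_mono node_gap)
  also have "\<dots> = (\<Sum>i\<in>vset N. ATlam E (lam j) i \<bullet> (X' i - Wcs i)) - (\<Sum>i\<in>vset N. pen i \<bullet> (X' i - Wcs i))
      - (\<Sum>i\<in>vset N. (Q i *v (Y' i - Y i)) \<bullet> (Y' i - Whs i))
      + 1/2 * G3_qf N C m (\<lambda>i. Y' i - Y i)"
    by (simp add: inner_diff_left sum_subtractf sum.distrib G3_qf_def sum_distrib_left)
  also have "(\<Sum>i\<in>vset N. ATlam E (lam j) i \<bullet> (X' i - Wcs i)) = (\<Sum>e\<in>E. lam j e \<bullet> Ablk X' e)"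
    unfolding sum_inner_ATlam[OF graph] using feas by (intro sum.cong refl) (simp add: Ablk_def)
  also have "(\<Sum>i\<in>vset N. pen i \<bullet> (X' i - Wcs i)) = rho * (\<Sum>e\<in>E. (norm (Ablk X' e))\<^sup>2)
      + 1/2 * (G1dag_qf N E rho P (\<lambda>i. X' i - Wcs i) + G1dag_qf N E rho P (\<lambda>i. X' i - X i)
               - G1dag_qf N E rho P (\<lambda>i. X i - Wcs i))"
    unfolding pen_def by (rule x_update_coupling_identity[OF graph feas Psym])
  also have "(\<Sum>i\<in>vset N. (Q i *v (Y' i - Y i)) \<bullet> (Y' i - Whs i))
      = 1/2 * (G2_qf N Q (\<lambda>i. Y' i - Whs i) + G2_qf N Q (\<lambda>i. Y' i - Y i) - G2_qf N Q (\<lambda>i. Y i - Whs i))"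
    unfolding G2_qf_def by (rule sum_wnorm2_polarization[OF Qsym])
  finally show ?thesis
    unfolding X'_def X_def Y'_def Y_def by (simp add: algebra_simps)
qed

lemma multiplier_gap:
  "(\<Sum>e\<in>E. lam j e \<bullet> Ablk (Wc (Suc j)) e) - rho * (\<Sum>e\<in>E. (norm (Ablk (Wc (Suc j)) e))\<^sup>2)
    \<le> ((\<Sum>e\<in>E. (norm (lam j e))\<^sup>2) - (\<Sum>e\<in>E. (norm (lam (Suc j) e))\<^sup>2)) / (2 * gamma * rho)"
proof -
  have "(\<Sum>e\<in>E. lam j e \<bullet> Ablk (Wc (Suc j)) e - rho * (norm (Ablk (Wc (Suc j)) e))\<^sup>2)
      \<le> (\<Sum>e\<in>E. ((norm (lam j e))\<^sup>2 - (norm (lam (Suc j) e))\<^sup>2) / (2 * gamma * rho))"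
    by (intro sum_mono) (simp add: multiplier_update multiplier_update_bound gamma rho)
  then show ?thesis
    by (simp only: sum_subtractf sum_distrib_left sum_divide_distrib diff_divide_distrib)
qed

lemma lyapunov_decrease:
  assumes feas: "\<forall>e\<in>E. Ablk Wcs e = 0"
  shows "Ftot N mu1 mu2 f (Wc (Suc j)) (Wh (Suc j)) - Ftot N mu1 mu2 f Wcs Whs
    \<le> (lyapunov Wcs Whs j - lyapunov Wcs Whs (Suc j)) / 2"
proof -
  define \<Lambda> where "\<Lambda> j = (\<Sum>e\<in>E. (norm (lam j e))\<^sup>2) / (gamma * rho)" for j
  have "(\<Sum>e\<in>E. lam j e \<bullet> Ablk (Wc (Suc j)) e) - rho * (\<Sum>e\<in>E. (norm (Ablk (Wc (Suc j)) e))\<^sup>2)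
      \<le> (\<Lambda> j - \<Lambda> (Suc j)) / 2"
    using multiplier_gap[of j] by (simp add: \<Lambda>_def diff_divide_distrib)
  then show ?thesis
    using objective_gap_step[OF feas, where j=j and Whs=Whs]
      G1dag_nonneg[of "\<lambda>i. Wc (Suc j) i - Wc j i"] G3_le_G2[of "\<lambda>i. Wh (Suc j) i - Wh j i"]
    unfolding lyapunov_def \<Lambda>_def[symmetric] by argo
qed

lemma ergodic_gap_bound:
  assumes feas: "\<forall>e\<in>E. Ablk Wcs e = 0" and k: "k \<ge> 1"
  shows "Ftot N mu1 mu2 f (\<lambda>i. (1 / real k) *\<^sub>R (\<Sum>j=1..k. Wc j i)) (\<lambda>i. (1 / real k) *\<^sub>R (\<Sum>j=1..k. Wh j i))
      - Ftot N mu1 mu2 f Wcs Whs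
    \<le> 1 / (2 * real k) * lyapunov Wcs Whs 0"
proof -
  let ?F = "\<lambda>j. Ftot N mu1 mu2 f (Wc j) (Wh j)" and ?L = "lyapunov Wcs Whs"
  have k_pos: "real k > 0" using k by simp
  have "(\<Sum>j<k. ?F (Suc j) - Ftot N mu1 mu2 f Wcs Whs) \<le> (\<Sum>j<k. (?L j - ?L (Suc j)) / 2)"
    by (intro sum_mono lyapunov_decrease[OF feas])
  also have "\<dots> = (?L 0 - ?L k) / 2"
    by (simp add: sum_divide_distrib[symmetric] sum_lessThan_telescope')
  also have "\<dots> \<le> ?L 0 / 2"
    using lyapunov_nonneg[of Wcs Whs k] by simp
  finally have "(\<Sum>j=1..k. ?F j) - real k * Ftot N mu1 mu2 f Wcs Whs \<le> ?L 0 / 2"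
    by (simp add: sum_subtractf sum.atLeast1_atMost_eq)
  then have "((\<Sum>j=1..k. ?F j) - real k * Ftot N mu1 mu2 f Wcs Whs) / real k \<le> (?L 0 / 2) / real k"
    using k_pos by (rule divide_right_mono[OF _ less_imp_le])
  then have "(1 / real k) * (\<Sum>j=1..k. ?F j) - Ftot N mu1 mu2 f Wcs Whs \<le> 1 / (2 * real k) * ?L 0"
    using k_pos by (simp add: diff_divide_distrib)
  moreover have "Ftot N mu1 mu2 f (\<lambda>i. (1 / real k) *\<^sub>R (\<Sum>j=1..k. Wc j i)) (\<lambda>i. (1 / real k) *\<^sub>R (\<Sum>j=1..k. Wh j i))
      \<le> (1 / real k) * (\<Sum>j=1..k. ?F j)"
    using Ftot_mean_le[OF cvx diff mu1 _ k] m by simp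
  ultimately show ?thesis by linarith
qed

end

theorem corollary1:
  fixes N :: nat and E :: "(nat \<times> nat) set"
    and f :: "nat \<Rightarrow> (real^'n) \<times> (real^'n) \<Rightarrow> real"
    and grad :: "nat \<Rightarrow> (real^'n) \<times> (real^'n) \<Rightarrow> (real^'n) \<times> (real^'n)"
    and C :: "nat \<Rightarrow> real" and mu1 mu2 m rho gamma :: real
    and P Q :: "nat \<Rightarrow> real^'n^'n"
    and Wcs Whs :: "nat \<Rightarrow> real^'n" and lams :: "nat \<times> nat \<Rightarrow> real^'n"
    and Wc Wh :: "nat \<Rightarrow> nat \<Rightarrow> real^'n" and lam :: "nat \<Rightarrow> nat \<times> nat \<Rightarrow> real^'n"
    and k :: nat
  assumes N2: "N \<ge> 2"
    and graph: "graph_ok N E" and conn: "connected_graph N E"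
    and diff: "\<And>i z. i \<in> vset N \<Longrightarrow> (f i has_derivative (\<lambda>h. grad i z \<bullet> h)) (at z)"
    and cvx: "\<And>i. i \<in> vset N \<Longrightarrow> convex_on UNIV (f i)"
    and lip: "\<And>i z z'. i \<in> vset N \<Longrightarrow> norm (grad i z - grad i z') \<le> C i * norm (z - z')"
    and mu1: "mu1 \<ge> 0" and mu2: "mu2 > 0" and m: "0 < m" "m \<le> mu2"
    and rho: "rho > 0"
    and Psym: "\<And>i. i \<in> vset N \<Longrightarrow> transpose (P i) = P i"
    and Qsym: "\<And>i. i \<in> vset N \<Longrightarrow> transpose (Q i) = Q i"
    and kkt1: "\<forall>e\<in>E. Ablk Wcs e = 0"
    and kkt2: "\<forall>i\<in>vset N. ATlam E lams i = fst (grad i (Wcs i, Whs i)) + mu1 *\<^sub>R Wcs i"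
    and kkt3: "\<forall>i\<in>vset N. snd (grad i (Wcs i, Whs i)) + mu2 *\<^sub>R Whs i = 0"
    and G1pd: "posdef_blk N (G1dag_qf N E rho P)"
    and G2G3: "posdef_blk N (\<lambda>W. G2_qf N Q W - G3_qf N C m W)"
    and gamma: "0 < gamma" "gamma < 2"
    and lam0: "\<forall>e\<in>E. lam 0 e = 0"
    and step1: "\<And>j i w. i \<in> vset N \<Longrightarrow>
        Lrho N E mu1 mu2 f rho ((Wc j)(i := Wc (Suc j) i)) (Wh j) (lam j)
          + 1/2 * wnorm2 (Wc (Suc j) i - Wc j i) (P i)
        \<le> Lrho N E mu1 mu2 f rho ((Wc j)(i := w)) (Wh j) (lam j)
          + 1/2 * wnorm2 (w - Wc j i) (P i)"
    and step2: "\<And>j e. e \<in> E \<Longrightarrow> lam (Suc j) e = lam j e - (gamma * rho) *\<^sub>R Ablk (Wc (Suc j)) e"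
    and step3: "\<And>j i w. i \<in> vset N \<Longrightarrow>
        Floc mu1 mu2 f i (Wc (Suc j) i) (Wh (Suc j) i) + 1/2 * wnorm2 (Wh (Suc j) i - Wh j i) (Q i)
        \<le> Floc mu1 mu2 f i (Wc (Suc j) i) w + 1/2 * wnorm2 (w - Wh j i) (Q i)"
    and k1: "k \<ge> 1"
  shows "Ftot N mu1 mu2 f (\<lambda>i. (1 / real k) *\<^sub>R (\<Sum>j=1..k. Wc j i))
                         (\<lambda>i. (1 / real k) *\<^sub>R (\<Sum>j=1..k. Wh j i))
         - Ftot N mu1 mu2 f Wcs Whs
       \<le> 1 / (2 * real k) * (G1dag_qf N E rho P (\<lambda>i. Wc 0 i - Wcs i)
                             + G2_qf N Q (\<lambda>i. Wh 0 i - Whs i))"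
proof -
  have G1dag_nonneg: "0 \<le> G1dag_qf N E rho P W" for W
  proof (rule posdef_blk_imp_nonneg[OF G1pd])
    fix W :: "nat \<Rightarrow> real^'n" assume "\<forall>i\<in>vset N. W i = 0"
    then show "G1dag_qf N E rho P W = 0"
      by (simp add: G1dag_qf_eq[OF graph] wnorm2_def graph_okD(2)[OF graph])
  qed
  have G3_le_G2: "G3_qf N C m W \<le> G2_qf N Q W" for W
    using posdef_blk_imp_nonneg[OF G2G3, of W] by (simp add: G2_qf_def G3_qf_def wnorm2_def)
  interpret prox_admm_iterates N E f grad C mu1 mu2 m rho gamma P Q Wc Wh lam
    using graph diff cvx lip mu1 m rho gamma Psym Qsym G1dag_nonneg G3_le_G2 step1 step2 step3
    by unfold_locales auto
  have "lyapunov Wcs Whs 0 = G1dag_qf N E rho P (\<lambda>i. Wc 0 i - Wcs i) + G2_qf N Q (\<lambda>i. Wh 0 i - Whs i)"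
    using lam0 by (simp add: lyapunov_def)
  with ergodic_gap_bound[OF kkt1 k1, where Whs=Whs] show ?thesis by simp
qed

end
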